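(* Let $V=\bigoplus_{i=1}^n B_i$ be a near vector space over a commutative $F$ with finitely many blocks. Then each block $B_i$ (embedded as $0\oplus\cdots\oplus B_i\oplus\cdots\oplus 0$) and the quasi-kernel $Q(V)=\bigcup_{i=1}^n B_i$ are definable in $V$ by quantifier-free formulas of the language $\mathcal L_{\bar F nvs}=\{+,0,(\lambda)_{\lambda\in\bar F}\}$ (equivalently, by formulas of $\mathcal L_{Fnvs}$ that are quantifier free modulo the quantifier-free definable functions of $\bar F$).
   Context: A near vector space $(V,F)$: $(V,+)$ a group, $F$ a set of endomorphisms containing $0,1,-1$, with $F\setminus\{0\}$ a subgroup of $\mathrm{Aut}(V,+)$ acting fixed point freely ($\alpha x=\beta x\Rightarrow\alpha=\beta$ or $x=0$), such that the quasi-kernel $Q(V)=\{u:\forall\alpha,\beta\in F\,\exists\gamma\in F\ \alpha u+\beta u=\gamma u\}$ generates $V$. Commutative: $\alpha(\beta v)=\beta(\alpha v)$. The blocks of $V$ are the summands in André's decomposition of $V$ into maximal regular near vector subspaces (regular: any two nonzero quasi-kernel elements $u,v$ satisfy $u+\lambda v\in Q(V)$ for some $\lambda\neq0$), each nonzero element of $Q(V)$ lying in exactly one block. $\bar F$ is the set of formal finite sums $\alpha_1+_\cdot\cdots+_\cdot\alpha_n$ of elements of $F$ acting by $v\mapsto\alpha_1(v)+\cdots+\alpha_n(v)$. $\mathcal L_{Fnvs}=\{+,0,(\lambda)_{\lambda\in F}\}$ and $\mathcal L_{\bar Fnvs}=\{+,0,(\lambda)_{\lambda\in\bar F}\}$,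 with unary function symbols interpreted as the actions. *)

theory Defs
  imports Main
begin

text \<open>The group (V,+) is the whole type 'v (class group_add); F is a set of maps 'v => 'v.\<close>

definition is_subgroup :: "'v::group_add set \<Rightarrow> bool" where
  "is_subgroup H \<longleftrightarrow> 0 \<in> H \<and> (\<forall>x\<in>H. \<forall>y\<in>H. x + y \<in> H) \<and> (\<forall>x\<in>H. - x \<in> H)"

definition gen_subgroup :: "'v::group_add set \<Rightarrow> 'v set" where
  "gen_subgroup S = \<Inter>{H. is_subgroup H \<and> S \<subseteq> H}"

definition quasi_kernel :: "('v::group_add \<Rightarrow> 'v) set \<Rightarrow> 'v set" where
  "quasi_kernel F = {u. \<forall>\<alpha>\<in>F. \<forall>\<beta>\<in>F. \<exists>\<gamma>\<in>F. \<alpha> u + \<beta> u = \<gamma> u}"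

definition near_vector_space :: "('v::group_add \<Rightarrow> 'v) set \<Rightarrow> bool" where
  "near_vector_space F \<longleftrightarrow>
     (\<forall>\<alpha>\<in>F. \<forall>x y. \<alpha> (x + y) = \<alpha> x + \<alpha> y) \<and>
     (\<lambda>x. 0) \<in> F \<and> id \<in> F \<and> uminus \<in> F \<and>
     (\<forall>\<alpha>\<in>F - {\<lambda>x. 0}. bij \<alpha>) \<and>
     (\<forall>\<alpha>\<in>F - {\<lambda>x. 0}. \<forall>\<beta>\<in>F - {\<lambda>x. 0}. \<alpha> \<circ> \<beta> \<in> F - {\<lambda>x. 0}) \<and>
     (\<forall>\<alpha>\<in>F - {\<lambda>x. 0}. inv \<alpha> \<in> F - {\<lambda>x. 0}) \<and>
     (\<forall>\<alpha>\<in>F. \<forall>\<beta>\<in>F. \<forall>x. \<alpha> x = \<beta> x \<longrightarrow> \<alpha> = \<beta> \<or> x = 0) \<and>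
     gen_subgroup (quasi_kernel F) = UNIV"

definition commutative_nvs :: "('v \<Rightarrow> 'v) set \<Rightarrow> bool" where
  "commutative_nvs F \<longleftrightarrow> (\<forall>\<alpha>\<in>F. \<forall>\<beta>\<in>F. \<forall>v. \<alpha> (\<beta> v) = \<beta> (\<alpha> v))"

text \<open>A near vector subspace: an F-invariant subgroup W which is a near vector space in its
  own right, i.e. generated by its quasi-kernel Q(W) = Q(V) \<inter> W.\<close>
definition nv_subspace :: "('v::group_add \<Rightarrow> 'v) set \<Rightarrow> 'v set \<Rightarrow> bool" where
  "nv_subspace F W \<longleftrightarrow> is_subgroup W \<and> (\<forall>\<alpha>\<in>F. \<alpha> ` W \<subseteq> W) \<and>
     gen_subgroup (quasi_kernel F \<inter> W) = W"

definition regular_subspace :: "('v::group_add \<Rightarrow> 'v) set \<Rightarrow> 'v set \<Rightarrow> bool" where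
  "regular_subspace F W \<longleftrightarrow> nv_subspace F W \<and>
     (\<forall>u\<in>quasi_kernel F \<inter> W - {0}. \<forall>v\<in>quasi_kernel F \<inter> W - {0}.
        \<exists>c\<in>F. c \<noteq> (\<lambda>x. 0) \<and> u + c v \<in> quasi_kernel F \<inter> W)"

definition is_block :: "('v::group_add \<Rightarrow> 'v) set \<Rightarrow> 'v set \<Rightarrow> bool" where
  "is_block F W \<longleftrightarrow> regular_subspace F W \<and>
     (\<forall>W'. regular_subspace F W' \<and> W \<subseteq> W' \<longrightarrow> W' = W)"

text \<open>V (= UNIV) is the internal direct sum of B 0, ..., B (n-1).\<close>
definition internal_direct_sum :: "(nat \<Rightarrow> 'v::group_add set) \<Rightarrow> nat \<Rightarrow> bool" where
  "internal_direct_sum B n \<longleftrightarrow> (\<forall>i<n. is_subgroup (B i)) \<and>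
     (\<forall>v. \<exists>!b. (\<forall>i<n. b i \<in> B i) \<and> (\<forall>i\<ge>n. b i = 0) \<and> v = sum_list (map b [0..<n]))"

text \<open>An element of Fbar is a formal sum alpha_1 +. ... +. alpha_k (k \<ge> 1) of elements of F,
  represented by the list [alpha_1, ..., alpha_k].\<close>
definition fbar_act :: "('v::monoid_add \<Rightarrow> 'v) list \<Rightarrow> 'v \<Rightarrow> 'v" where
  "fbar_act l v = sum_list (map (\<lambda>\<alpha>. \<alpha> v) l)"

datatype 'f tm = Var | Zero | Plus "'f tm" "'f tm" | App 'f "'f tm"

datatype 'f qf_fm = Eq "'f tm" "'f tm" | Neg "'f qf_fm" | Conj "'f qf_fm" "'f qf_fm"
  | Disj "'f qf_fm" "'f qf_fm"

fun syms_tm :: "'f tm \<Rightarrow> 'f set" where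
  "syms_tm Var = {}" | "syms_tm Zero = {}"
| "syms_tm (Plus s t) = syms_tm s \<union> syms_tm t"
| "syms_tm (App f t) = insert f (syms_tm t)"

fun syms_fm :: "'f qf_fm \<Rightarrow> 'f set" where
  "syms_fm (Eq s t) = syms_tm s \<union> syms_tm t"
| "syms_fm (Neg p) = syms_fm p"
| "syms_fm (Conj p q) = syms_fm p \<union> syms_fm q"
| "syms_fm (Disj p q) = syms_fm p \<union> syms_fm q"

fun eval_tm :: "('v::monoid_add \<Rightarrow> 'v) list tm \<Rightarrow> 'v \<Rightarrow> 'v" where
  "eval_tm Var x = x" | "eval_tm Zero x = 0"
| "eval_tm (Plus s t) x = eval_tm s x + eval_tm t x"
| "eval_tm (App l t) x = fbar_act l (eval_tm t x)"

fun sat :: "('v::monoid_add \<Rightarrow> 'v) list qf_fm \<Rightarrow> 'v \<Rightarrow> bool" where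
  "sat (Eq s t) x \<longleftrightarrow> eval_tm s x = eval_tm t x"
| "sat (Neg p) x \<longleftrightarrow> \<not> sat p x"
| "sat (Conj p q) x \<longleftrightarrow> sat p x \<and> sat q x"
| "sat (Disj p q) x \<longleftrightarrow> sat p x \<or> sat q x"

definition fbar_symbol :: "('v \<Rightarrow> 'v) set \<Rightarrow> ('v \<Rightarrow> 'v) list \<Rightarrow> bool" where
  "fbar_symbol F l \<longleftrightarrow> l \<noteq> [] \<and> set l \<subseteq> F"

definition qf_definable :: "('v::monoid_add \<Rightarrow> 'v) set \<Rightarrow> 'v set \<Rightarrow> bool" where
  "qf_definable F S \<longleftrightarrow> (\<exists>\<phi>. (\<forall>l\<in>syms_fm \<phi>. fbar_symbol F l) \<and> S = {x. sat \<phi> x})"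

end

theory Submission imports Defs begin

text \<open>Say that u and v have the same addition table if, for all \<alpha>, \<beta>, \<gamma> \<in> F,
  \<alpha> u + \<beta> u = \<gamma> u holds exactly when \<alpha> v + \<beta> v = \<gamma> v does. In a commutative near
  vector space two nonzero elements of the quasi-kernel whose sum is again in the
  quasi-kernel have the same table, and conversely elements with the same table add up
  inside the quasi-kernel. Hence the blocks are precisely the classes of this relation
  (together with 0). Two distinct blocks therefore have different tables: some equation
  \<alpha> x + \<beta> x = \<gamma> x holds on the whole of one block and only at 0 on the other. Since
  F acts componentwise on V = B 1 \<oplus> \<dots> \<oplus> B n, the block B i is the
  intersection of such equations over j \<noteq> i, and Q(V) is the union of the blocks.\<close>

definition same_table :: "('v::plus \<Rightarrow> 'v) set \<Rightarrow> 'v \<Rightarrow> 'v \<Rightarrow> bool" where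
  "same_table F u v \<longleftrightarrow> (\<forall>\<alpha>\<in>F. \<forall>\<beta>\<in>F. \<forall>\<gamma>\<in>F. \<alpha> u + \<beta> u = \<gamma> u \<longleftrightarrow> \<alpha> v + \<beta> v = \<gamma> v)"

definition table_class :: "('v::group_add \<Rightarrow> 'v) set \<Rightarrow> 'v \<Rightarrow> 'v set" where
  "table_class F u = {v \<in> quasi_kernel F. v = 0 \<or> same_table F u v}"

lemma same_table_refl: "same_table F u u"
  by (simp add: same_table_def)

lemma same_table_sym: "same_table F u v \<Longrightarrow> same_table F v u"
  by (simp add: same_table_def)

lemma same_table_trans: "same_table F u v \<Longrightarrow> same_table F v w \<Longrightarrow> same_table F u w"
  by (simp add: same_table_def)

lemma gen_subgroup_subgroup: "is_subgroup H \<Longrightarrow> gen_subgroup H = H"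
  unfolding gen_subgroup_def by blast

lemma sum_list_upt_single:
  assumes "i < n" and "\<And>k. k \<noteq> i \<Longrightarrow> b k = 0"
  shows "sum_list (map b [0..<n]) = (b i :: 'v::monoid_add)"
  using assms
proof (induction n)
  case (Suc m)
  show ?case
  proof (cases "i = m")
    case True
    have "sum_list (map b [0..<m]) = sum_list (map (\<lambda>_. 0) [0..<m])"
      using Suc.prems True by (intro arg_cong[where f = sum_list] map_cong) auto
    then show ?thesis using True by simp
  qed (use Suc in simp)
qed simp

lemma qf_definable_UNIV: "qf_definable F UNIV"
  unfolding qf_definable_def by (rule exI[of _ "Eq Var Var"]) auto

lemma qf_definable_empty: "qf_definable F {}"
  unfolding qf_definable_def by (rule exI[of _ "Neg (Eq Var Var)"]) simp

lemma qf_definable_Int: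
  assumes "qf_definable F S" "qf_definable F T" shows "qf_definable F (S \<inter> T)"
proof -
  obtain \<phi> \<psi> where "\<forall>l\<in>syms_fm \<phi>. fbar_symbol F l" "S = {x. sat \<phi> x}"
    and "\<forall>l\<in>syms_fm \<psi>. fbar_symbol F l" "T = {x. sat \<psi> x}"
    using assms unfolding qf_definable_def by blast
  then show ?thesis unfolding qf_definable_def by (intro exI[of _ "Conj \<phi> \<psi>"]) auto
qed

lemma qf_definable_Un:
  assumes "qf_definable F S" "qf_definable F T" shows "qf_definable F (S \<union> T)"
proof -
  obtain \<phi> \<psi> where "\<forall>l\<in>syms_fm \<phi>. fbar_symbol F l" "S = {x. sat \<phi> x}"
    and "\<forall>l\<in>syms_fm \<psi>. fbar_symbol F l" "T = {x. sat \<psi> x}"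
    using assms unfolding qf_definable_def by blast
  then show ?thesis unfolding qf_definable_def by (intro exI[of _ "Disj \<phi> \<psi>"]) auto
qed

lemma qf_definable_INT:
  assumes "finite I" and "\<And>i. i \<in> I \<Longrightarrow> qf_definable F (S i)"
  shows "qf_definable F (\<Inter>i\<in>I. S i)"
  using assms by (induction I rule: finite_induct) (auto intro: qf_definable_UNIV qf_definable_Int)

lemma qf_definable_UN:
  assumes "finite I" and "\<And>i. i \<in> I \<Longrightarrow> qf_definable F (S i)"
  shows "qf_definable F (\<Union>i\<in>I. S i)"
  using assms by (induction I rule: finite_induct) (auto intro: qf_definable_empty qf_definable_Un)

lemma qf_definable_equation:
  assumes "\<alpha> \<in> F" "\<beta> \<in> F" "\<gamma> \<in> F"
  shows "qf_definable F {x. \<alpha> x + \<beta> x = \<gamma> (x::'v::monoid_add)}"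
  unfolding qf_definable_def
  using assms by (intro exI[of _ "Eq (App [\<alpha>, \<beta>] Var) (App [\<gamma>] Var)"]) (auto simp: fbar_act_def fbar_symbol_def)

lemma internal_direct_sum_unique:
  assumes "internal_direct_sum B n"
    and "\<forall>k<n. b k \<in> B k" "\<forall>k\<ge>n. b k = 0" and "\<forall>k<n. c k \<in> B k" "\<forall>k\<ge>n. c k = 0"
    and "sum_list (map b [0..<n]) = sum_list (map c [0..<n])"
  shows "b = c"
  using assms unfolding internal_direct_sum_def by metis

locale comm_near_vector_space =
  fixes F :: "('v::group_add \<Rightarrow> 'v) set"
  assumes near_vector_space: "near_vector_space F"
    and commutative: "commutative_nvs F"
begin

abbreviation (input) zero_map :: "'v \<Rightarrow> 'v" where "zero_map \<equiv> \<lambda>x. 0"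
abbreviation Q where "Q \<equiv> quasi_kernel F"

lemma map_add: "\<alpha> \<in> F \<Longrightarrow> \<alpha> (x + y) = \<alpha> x + \<alpha> y"
  using near_vector_space unfolding near_vector_space_def by (elim conjE) blast

lemma zero_map_mem: "zero_map \<in> F"
  using near_vector_space unfolding near_vector_space_def by (elim conjE) assumption

lemma id_mem: "id \<in> F"
  using near_vector_space unfolding near_vector_space_def by (elim conjE) assumption

lemma uminus_mem: "uminus \<in> F"
  using near_vector_space unfolding near_vector_space_def by (elim conjE) assumption

lemma bij_map: "\<alpha> \<in> F \<Longrightarrow> \<alpha> \<noteq> zero_map \<Longrightarrow> bij \<alpha>"
  using near_vector_space unfolding near_vector_space_def by (elim conjE) blast

lemma comp_mem:
  "\<alpha> \<in> F \<Longrightarrow> \<alpha> \<noteq> zero_map \<Longrightarrow> \<beta> \<in> F \<Longrightarrow> \<beta> \<noteq> zero_map \<Longrightarrow> \<alpha> \<circ> \<beta> \<in> F \<and> \<alpha> \<circ> \<beta> \<noteq> zero_map"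
  using near_vector_space unfolding near_vector_space_def by (elim conjE) blast

lemma inv_mem: "\<alpha> \<in> F \<Longrightarrow> \<alpha> \<noteq> zero_map \<Longrightarrow> inv \<alpha> \<in> F \<and> inv \<alpha> \<noteq> zero_map"
  using near_vector_space unfolding near_vector_space_def by (elim conjE) blast

lemma fixed_point_free: "\<alpha> \<in> F \<Longrightarrow> \<beta> \<in> F \<Longrightarrow> \<alpha> x = \<beta> x \<Longrightarrow> x \<noteq> 0 \<Longrightarrow> \<alpha> = \<beta>"
  using near_vector_space unfolding near_vector_space_def by (elim conjE) blast

lemma quasi_kernel_generates: "gen_subgroup Q = UNIV"
  using near_vector_space unfolding near_vector_space_def by (elim conjE) assumption

lemma map_commute: "\<alpha> \<in> F \<Longrightarrow> \<beta> \<in> F \<Longrightarrow> \<alpha> (\<beta> v) = \<beta> (\<alpha> v)"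
  using commutative unfolding commutative_nvs_def by blast

lemma add_commute: "(x::'v) + y = y + x"
proof -
  have "x + y = - (- y + - x)" by (simp add: minus_add)
  also have "\<dots> = y + x" using map_add[OF uminus_mem, of "-y" "-x"] by simp
  finally show ?thesis .
qed

lemma add_left_commute: "(x::'v) + (y + z) = y + (x + z)"
  by (simp add: add.assoc[symmetric] add_commute[of x y])

lemmas add_ac = add.assoc add_commute add_left_commute

lemma diff_eq_diff_if_add_eq:
  assumes "a + b = c + d" shows "a - c = d - (b::'v)"
proof -
  have "a - c = (a + b) + (- b + - c)"
    by (simp only: diff_conv_add_uminus add.assoc add_minus_cancel)
  also have "\<dots> = (c + d) + (- b + - c)" using assms by simp
  also have "\<dots> = d - b"
    by (simp only: add_commute[of c d] add_commute[of "-b" "-c"] add.assoc add_minus_cancel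
        diff_conv_add_uminus)
  finally show ?thesis .
qed

lemma map_zero: "\<alpha> \<in> F \<Longrightarrow> \<alpha> 0 = 0"
  using map_add[of \<alpha> 0 0] by (metis add.right_neutral add_left_cancel)

lemma zero_map_iff: "\<alpha> \<in> F \<Longrightarrow> x \<noteq> 0 \<Longrightarrow> \<alpha> x = 0 \<longleftrightarrow> \<alpha> = zero_map"
  using fixed_point_free[OF _ zero_map_mem] by auto

lemma neg_map_mem:
  assumes "\<beta> \<in> F" shows "(\<lambda>x. - \<beta> x) \<in> F"
proof (cases "uminus = zero_map \<or> \<beta> = zero_map")
  case True
  then have "(\<lambda>x. - \<beta> x) = zero_map" by (auto simp: fun_eq_iff dest: fun_cong)
  then show ?thesis using zero_map_mem by simp
next
  case False
  then show ?thesis using comp_mem[OF uminus_mem _ assms] by (simp add: comp_def)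
qed

lemma inv_map_cancel: "\<alpha> \<in> F \<Longrightarrow> \<alpha> \<noteq> zero_map \<Longrightarrow> inv \<alpha> (\<alpha> x) = x"
  using bij_map by (simp add: bij_is_inj)

lemma quasi_kernelD: "u \<in> Q \<Longrightarrow> \<alpha> \<in> F \<Longrightarrow> \<beta> \<in> F \<Longrightarrow> \<exists>\<gamma>\<in>F. \<alpha> u + \<beta> u = \<gamma> u"
  unfolding quasi_kernel_def by blast

lemma zero_mem_quasi_kernel: "0 \<in> Q"
  unfolding quasi_kernel_def using map_zero zero_map_mem by force

lemma map_mem_quasi_kernel:
  assumes "u \<in> Q" and "\<delta> \<in> F" shows "\<delta> u \<in> Q"
  unfolding quasi_kernel_def
proof (intro CollectI ballI)
  fix \<alpha> \<beta> assume "\<alpha> \<in> F" "\<beta> \<in> F"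
  then obtain \<gamma> where "\<gamma> \<in> F" "\<alpha> u + \<beta> u = \<gamma> u" using quasi_kernelD[OF assms(1)] by blast
  moreover have "\<alpha> (\<delta> u) + \<beta> (\<delta> u) = \<delta> (\<alpha> u + \<beta> u)"
    using \<open>\<alpha> \<in> F\<close> \<open>\<beta> \<in> F\<close> assms(2) by (simp add: map_add map_commute)
  ultimately show "\<exists>\<gamma>\<in>F. \<alpha> (\<delta> u) + \<beta> (\<delta> u) = \<gamma> (\<delta> u)"
    using assms(2) by (metis map_commute)
qed

lemma quasi_kernel_diff: "u \<in> Q \<Longrightarrow> \<alpha> \<in> F \<Longrightarrow> \<beta> \<in> F \<Longrightarrow> \<exists>\<epsilon>\<in>F. \<alpha> u - \<beta> u = \<epsilon> u"
  using quasi_kernelD[OF _ _ neg_map_mem, of u \<alpha> \<beta>] by simp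

lemma table_equation_add:
  assumes "same_table F u v" and "\<alpha> \<in> F" "\<beta> \<in> F" "\<gamma> \<in> F" and "\<alpha> u + \<beta> u = \<gamma> u"
  shows "\<alpha> (u + v) + \<beta> (u + v) = \<gamma> (u + v)"
proof -
  have "\<alpha> v + \<beta> v = \<gamma> v" using assms unfolding same_table_def by blast
  have "\<alpha> (u + v) + \<beta> (u + v) = (\<alpha> u + \<beta> u) + (\<alpha> v + \<beta> v)"
    using assms(2,3) by (simp add: map_add add_ac)
  also have "\<dots> = \<gamma> (u + v)"
    using assms(4,5) \<open>\<alpha> v + \<beta> v = \<gamma> v\<close> by (simp add: map_add)
  finally show ?thesis .
qed

lemma add_mem_quasi_kernel:
  assumes "u \<in> Q" and "same_table F u v" shows "u + v \<in> Q"
  unfolding quasi_kernel_def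
proof (intro CollectI ballI)
  fix \<alpha> \<beta> assume "\<alpha> \<in> F" "\<beta> \<in> F"
  with assms obtain \<gamma> where "\<gamma> \<in> F" "\<alpha> u + \<beta> u = \<gamma> u" using quasi_kernelD by blast
  with assms(2) \<open>\<alpha> \<in> F\<close> \<open>\<beta> \<in> F\<close> show "\<exists>\<gamma>\<in>F. \<alpha> (u + v) + \<beta> (u + v) = \<gamma> (u + v)"
    using table_equation_add by blast
qed

lemma same_table_add:
  assumes "u \<in> Q" and "same_table F u v" and "u + v \<noteq> 0"
  shows "same_table F u (u + v)"
  unfolding same_table_def
proof (intro ballI iffI)
  fix \<alpha> \<beta> \<gamma> assume abc: "\<alpha> \<in> F" "\<beta> \<in> F" "\<gamma> \<in> F"
  then show "\<alpha> u + \<beta> u = \<gamma> u \<Longrightarrow> \<alpha> (u + v) + \<beta> (u + v) = \<gamma> (u + v)"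
    using assms(2) table_equation_add by blast
  assume eq: "\<alpha> (u + v) + \<beta> (u + v) = \<gamma> (u + v)"
  obtain \<gamma>' where \<gamma>': "\<gamma>' \<in> F" "\<alpha> u + \<beta> u = \<gamma>' u" using quasi_kernelD assms(1) abc by blast
  then have "\<alpha> (u + v) + \<beta> (u + v) = \<gamma>' (u + v)"
    using assms(2) abc table_equation_add by blast
  with eq have "\<gamma>' = \<gamma>" using fixed_point_free \<gamma>'(1) abc(3) assms(3) by metis
  with \<gamma>' show "\<alpha> u + \<beta> u = \<gamma> u" by simp
qed

lemma same_table_map:
  assumes "\<delta> \<in> F" and "\<delta> \<noteq> zero_map" shows "same_table F u (\<delta> u)"
  unfolding same_table_def
proof (intro ballI)
  fix \<alpha> \<beta> \<gamma> assume abc: "\<alpha> \<in> F" "\<beta> \<in> F" "\<gamma> \<in> F"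
  have "\<alpha> (\<delta> u) + \<beta> (\<delta> u) = \<delta> (\<alpha> u + \<beta> u)" and "\<gamma> (\<delta> u) = \<delta> (\<gamma> u)"
    using abc assms(1) by (simp_all add: map_add map_commute)
  moreover have "inj \<delta>" using bij_map[OF assms] by (rule bij_is_inj)
  ultimately show "\<alpha> u + \<beta> u = \<gamma> u \<longleftrightarrow> \<alpha> (\<delta> u) + \<beta> (\<delta> u) = \<gamma> (\<delta> u)"
    by (simp add: inj_eq)
qed

text \<open>If v is not an F-multiple of u, the equation g1 u + g2 v = g3 (u + v) forces
  g1 = g2 = g3: otherwise (g1 - g3) u = (g3 - g2) v exhibits v as such a multiple.\<close>
lemma same_table_if_add_mem:
  assumes "u \<in> Q" "v \<in> Q" "u + v \<in> Q" and "u \<noteq> 0" "v \<noteq> 0"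
  shows "same_table F u v"
proof (cases "\<exists>\<delta>\<in>F. \<delta> \<noteq> zero_map \<and> v = \<delta> u")
  case True
  then show ?thesis using same_table_map by blast
next
  case not_multiple: False
  have common: "\<exists>g\<in>F. \<alpha> u + \<beta> u = g u \<and> \<alpha> v + \<beta> v = g v" if ab: "\<alpha> \<in> F" "\<beta> \<in> F" for \<alpha> \<beta>
  proof -
    obtain g1 where g1: "g1 \<in> F" "\<alpha> u + \<beta> u = g1 u" using quasi_kernelD assms(1) ab by blast
    obtain g2 where g2: "g2 \<in> F" "\<alpha> v + \<beta> v = g2 v" using quasi_kernelD assms(2) ab by blast
    obtain g3 where g3: "g3 \<in> F" "\<alpha> (u + v) + \<beta> (u + v) = g3 (u + v)"
      using quasi_kernelD assms(3) ab by blast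
    have "g1 u + g2 v = (\<alpha> u + \<beta> u) + (\<alpha> v + \<beta> v)" using g1 g2 by simp
    also have "\<dots> = \<alpha> (u + v) + \<beta> (u + v)" using ab by (simp add: map_add add_ac)
    also have "\<dots> = g3 u + g3 v" using g3 by (simp add: map_add)
    finally have "g1 u - g3 u = g3 v - g2 v" by (rule diff_eq_diff_if_add_eq)
    moreover obtain \<epsilon> where "\<epsilon> \<in> F" "g1 u - g3 u = \<epsilon> u"
      using quasi_kernel_diff assms(1) g1(1) g3(1) by blast
    moreover obtain \<epsilon>' where "\<epsilon>' \<in> F" "g3 v - g2 v = \<epsilon>' v"
      using quasi_kernel_diff assms(2) g2(1) g3(1) by blast
    ultimately have \<epsilon>: "\<epsilon> \<in> F" "\<epsilon>' \<in> F" "\<epsilon> u = \<epsilon>' v" "g1 u - g3 u = \<epsilon> u" "g3 v - g2 v = \<epsilon>' v"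
      by simp_all
    have "\<epsilon> = zero_map"
    proof (rule ccontr)
      assume "\<epsilon> \<noteq> zero_map"
      moreover have "\<epsilon>' \<noteq> zero_map" using \<epsilon> zero_map_iff assms(4) \<open>\<epsilon> \<noteq> zero_map\<close> by force
      ultimately have "inv \<epsilon>' \<circ> \<epsilon> \<in> F \<and> inv \<epsilon>' \<circ> \<epsilon> \<noteq> zero_map"
        using comp_mem inv_mem \<epsilon> by blast
      moreover have "v = (inv \<epsilon>' \<circ> \<epsilon>) u"
        using \<epsilon>(3) inv_map_cancel[OF \<epsilon>(2) \<open>\<epsilon>' \<noteq> zero_map\<close>, of v] by simp
      ultimately show False using not_multiple by blast
    qed
    then have "\<epsilon>' v = 0" using \<epsilon>(3) by simp
    then have "g1 u = g3 u" "g3 v = g2 v" using \<epsilon> \<open>\<epsilon> = zero_map\<close> by simp_all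
    then have "g1 = g3" "g3 = g2"
      using fixed_point_free[OF g1(1) g3(1) _ assms(4)] fixed_point_free[OF g3(1) g2(1) _ assms(5)]
      by simp_all
    then show ?thesis using g1 g2 by auto
  qed
  show ?thesis
    unfolding same_table_def
  proof (intro ballI)
    fix \<alpha> \<beta> \<gamma> assume "\<alpha> \<in> F" "\<beta> \<in> F" "\<gamma> \<in> F"
    then obtain g where "g \<in> F" "\<alpha> u + \<beta> u = g u" "\<alpha> v + \<beta> v = g v" using common by blast
    then show "\<alpha> u + \<beta> u = \<gamma> u \<longleftrightarrow> \<alpha> v + \<beta> v = \<gamma> v"
      using fixed_point_free[OF \<open>g \<in> F\<close> \<open>\<gamma> \<in> F\<close>] assms(4,5) by auto
  qed
qed

lemma regular_same_table:
  assumes "regular_subspace F W" and "x \<in> Q \<inter> W" "y \<in> Q \<inter> W" and "x \<noteq> 0" "y \<noteq> 0"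
  shows "same_table F x y"
proof -
  obtain c where c: "c \<in> F" "c \<noteq> zero_map" "x + c y \<in> Q"
    using assms unfolding regular_subspace_def by blast
  have "c y \<noteq> 0" using zero_map_iff c assms(5) by blast
  then have "same_table F x (c y)"
    using same_table_if_add_mem c assms map_mem_quasi_kernel by blast
  moreover have "same_table F y (c y)" using same_table_map c by blast
  ultimately show ?thesis using same_table_sym same_table_trans by blast
qed


lemma regular_subset_quasi_kernel:
  assumes "regular_subspace F W" shows "W \<subseteq> Q"
proof -
  have W: "is_subgroup W" "gen_subgroup (Q \<inter> W) = W"
    using assms unfolding regular_subspace_def nv_subspace_def by auto
  have "is_subgroup (Q \<inter> W)"
    unfolding is_subgroup_def
  proof (intro conjI ballI)
    show "0 \<in> Q \<inter> W" using zero_mem_quasi_kernel W(1) unfolding is_subgroup_def by blast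
  next
    fix x y assume xy: "x \<in> Q \<inter> W" "y \<in> Q \<inter> W"
    have "x + y \<in> Q"
    proof (cases "x = 0 \<or> y = 0")
      case False
      then show ?thesis
        using regular_same_table[OF assms xy] add_mem_quasi_kernel xy by blast
    qed (use xy in auto)
    then show "x + y \<in> Q \<inter> W" using xy W(1) unfolding is_subgroup_def by blast
  next
    fix x assume "x \<in> Q \<inter> W"
    then show "- x \<in> Q \<inter> W"
      using map_mem_quasi_kernel[OF _ uminus_mem] W(1) unfolding is_subgroup_def by auto
  qed
  then show ?thesis using W(2) gen_subgroup_subgroup by auto
qed

lemma zero_mem_table_class: "0 \<in> table_class F u"
  using zero_mem_quasi_kernel by (simp add: table_class_def)

lemma add_mem_table_class:
  assumes "x \<in> table_class F u" "y \<in> table_class F u" shows "x + y \<in> table_class F u"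
proof (cases "x = 0 \<or> y = 0")
  case False
  then have "same_table F u x" "same_table F u y" "x \<in> Q"
    using assms by (auto simp: table_class_def)
  then have "same_table F x y" using same_table_sym same_table_trans by blast
  then have "x + y \<in> Q" and "x + y \<noteq> 0 \<Longrightarrow> same_table F u (x + y)"
    using add_mem_quasi_kernel same_table_add same_table_trans \<open>same_table F u x\<close> \<open>x \<in> Q\<close>
    by blast+
  then show ?thesis by (auto simp: table_class_def)
qed (use assms in auto)

lemma map_mem_table_class:
  assumes "\<alpha> \<in> F" and "x \<in> table_class F u" shows "\<alpha> x \<in> table_class F u"
proof (cases "\<alpha> = zero_map \<or> x = 0")
  case True
  then show ?thesis using zero_mem_table_class map_zero[OF assms(1)] by auto
next
  case False
  then have "x \<in> Q" "same_table F u x" using assms(2) by (auto simp: table_class_def)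
  moreover have "same_table F x (\<alpha> x)" using same_table_map assms(1) False by blast
  ultimately have "same_table F u (\<alpha> x)" using same_table_trans by blast
  then show ?thesis
    using map_mem_quasi_kernel[OF \<open>x \<in> Q\<close> assms(1)] by (simp add: table_class_def)
qed

lemma regular_table_class: "regular_subspace F (table_class F u)"
proof -
  let ?C = "table_class F u"
  have subgroup: "is_subgroup ?C"
    unfolding is_subgroup_def
    using zero_mem_table_class add_mem_table_class map_mem_table_class[OF uminus_mem] by auto
  have "?C \<subseteq> Q" by (auto simp: table_class_def)
  then have "gen_subgroup (Q \<inter> ?C) = ?C" using gen_subgroup_subgroup[OF subgroup] by (simp add: Int_absorb1)
  moreover have "id \<noteq> zero_map \<and> x + id y \<in> Q \<inter> ?C" if "x \<in> Q \<inter> ?C - {0}" "y \<in> Q \<inter> ?C" for x y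
    using that add_mem_table_class \<open>?C \<subseteq> Q\<close> by (auto dest: fun_cong[of _ _ x])
  ultimately show ?thesis
    unfolding regular_subspace_def nv_subspace_def
    using subgroup map_mem_table_class id_mem by blast
qed

lemma regular_subset_table_class:
  assumes "regular_subspace F W" and "u \<in> W" "u \<noteq> 0" shows "W \<subseteq> table_class F u"
  using regular_same_table[OF assms(1)] regular_subset_quasi_kernel[OF assms(1)] assms(2,3)
  by (auto simp: table_class_def)

lemma is_block_table_class:
  assumes "u \<in> Q" "u \<noteq> 0" shows "is_block F (table_class F u)"
proof -
  have "u \<in> table_class F u" using assms same_table_refl by (simp add: table_class_def)
  then show ?thesis
    unfolding is_block_def using regular_table_class regular_subset_table_class assms(2) by blast
qed

lemma block_eq_table_class:
  assumes "is_block F W" and "u \<in> W" "u \<noteq> 0" shows "W = table_class F u"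
  using assms regular_subset_table_class regular_table_class unfolding is_block_def by blast

lemma is_block_UNIV:
  assumes "Q \<subseteq> {0}" shows "is_block F UNIV"
  using assms quasi_kernel_generates
  unfolding is_block_def regular_subspace_def nv_subspace_def is_subgroup_def by auto

lemma quasi_kernel_eq_Union_blocks: "Q = \<Union>{W. is_block F W}"
proof
  show "\<Union>{W. is_block F W} \<subseteq> Q"
    using regular_subset_quasi_kernel unfolding is_block_def by blast
  show "Q \<subseteq> \<Union>{W. is_block F W}"
  proof
    fix u assume "u \<in> Q"
    show "u \<in> \<Union>{W. is_block F W}"
    proof (cases "\<exists>v\<in>Q. v \<noteq> 0")
      case True
      then obtain v where v: "v \<in> Q" "v \<noteq> 0" by blast
      let ?w = "if u = 0 then v else u"
      have "?w \<in> Q" "?w \<noteq> 0" using v \<open>u \<in> Q\<close> by simp_all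
      moreover have "u \<in> table_class F ?w"
        using zero_mem_table_class \<open>u \<in> Q\<close> by (simp add: table_class_def same_table_refl)
      ultimately show ?thesis using is_block_table_class by blast
    next
      case False
      then show ?thesis using is_block_UNIV by blast
    qed
  qed
qed

lemma table_class_eq: "same_table F u v \<Longrightarrow> table_class F u = table_class F v"
  unfolding table_class_def using same_table_sym same_table_trans by blast

lemma separating_equation:
  assumes "u \<in> Q" and "u \<noteq> 0" "v \<noteq> 0" and "\<not> same_table F u v"
  shows "\<exists>\<alpha>\<in>F. \<exists>\<beta>\<in>F. \<exists>g\<in>F. (\<forall>x\<in>table_class F u. \<alpha> x + \<beta> x = g x)
           \<and> (\<forall>y\<in>table_class F v. \<alpha> y + \<beta> y = g y \<longrightarrow> y = 0)"
proof -
  obtain \<alpha> \<beta> \<gamma> where abc: "\<alpha> \<in> F" "\<beta> \<in> F" "\<gamma> \<in> F"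
    and differ: "\<not> (\<alpha> u + \<beta> u = \<gamma> u \<longleftrightarrow> \<alpha> v + \<beta> v = \<gamma> v)"
    using assms(4) unfolding same_table_def by blast
  obtain g where g: "g \<in> F" "\<alpha> u + \<beta> u = g u" using quasi_kernelD[OF assms(1) abc(1,2)] by blast
  have "\<alpha> v + \<beta> v \<noteq> g v"
    using differ g abc fixed_point_free[of g \<gamma>] assms(2,3) by metis
  then have "\<alpha> y + \<beta> y \<noteq> g y" if "y \<in> table_class F v" "y \<noteq> 0" for y
    using that abc g(1) unfolding table_class_def same_table_def by blast
  moreover have "\<alpha> x + \<beta> x = g x" if "x \<in> table_class F u" for x
    using that abc g map_zero[of \<alpha>] map_zero[of \<beta>] map_zero[of g]
    unfolding table_class_def same_table_def by auto
  ultimately show ?thesis using abc g(1) by blast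
qed

lemma blocks_separated:
  assumes "is_block F B" "is_block F B'" and "B \<noteq> B'"
  shows "\<exists>\<alpha>\<in>F. \<exists>\<beta>\<in>F. \<exists>\<gamma>\<in>F. (\<forall>x\<in>B. \<alpha> x + \<beta> x = \<gamma> x) \<and> (\<forall>y\<in>B'. \<alpha> y + \<beta> y = \<gamma> y \<longrightarrow> y = 0)"
proof (cases "B' \<subseteq> {0}")
  case True
  then show ?thesis using zero_map_mem by (intro bexI[of _ zero_map]) auto
next
  case False
  then obtain v where v: "v \<in> B'" "v \<noteq> 0" by blast
  then have B': "B' = table_class F v" using block_eq_table_class assms(2) by blast
  have "\<not> B \<subseteq> {0}"
  proof
    assume "B \<subseteq> {0}"
    then have "B \<subseteq> table_class F v" using zero_mem_table_class by blast
    then show False using assms B' regular_table_class unfolding is_block_def by blast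
  qed
  then obtain u where u: "u \<in> B" "u \<noteq> 0" by blast
  then have B: "B = table_class F u" using block_eq_table_class assms(1) by blast
  have "u \<in> Q" using u assms(1) regular_subset_quasi_kernel unfolding is_block_def by blast
  moreover have "\<not> same_table F u v" using table_class_eq assms(3) B B' by blast
  ultimately show ?thesis using separating_equation u(2) v(2) B B' by blast
qed


lemma map_sum_list: "\<alpha> \<in> F \<Longrightarrow> \<alpha> (sum_list (map b xs)) = sum_list (map (\<lambda>k. \<alpha> (b k)) xs)"
  by (induction xs) (auto simp: map_add map_zero)

lemma sum_list_map_add:
  "sum_list (map (\<lambda>k. f k + g k) xs) = sum_list (map f xs) + sum_list (map (g :: _ \<Rightarrow> 'v) xs)"
  by (induction xs) (auto simp: add_ac)

text \<open>The two sides of the equation, evaluated componentwise, are two decompositions of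
  \<gamma> x; uniqueness of the decomposition splits the equation into its components.\<close>
lemma direct_sum_equation_components:
  assumes ds: "internal_direct_sum B n" and invariant: "\<forall>k<n. \<forall>\<alpha>\<in>F. \<alpha> ` B k \<subseteq> B k"
    and abc: "\<alpha> \<in> F" "\<beta> \<in> F" "\<gamma> \<in> F"
    and b: "\<forall>k<n. b k \<in> B k" "\<forall>k\<ge>n. b k = 0" and x: "x = sum_list (map b [0..<n])"
    and eq: "\<alpha> x + \<beta> x = \<gamma> x"
  shows "\<forall>k<n. \<alpha> (b k) + \<beta> (b k) = \<gamma> (b k)"
proof -
  have image_mem: "\<delta> (b k) \<in> B k" if "\<delta> \<in> F" "k < n" for \<delta> k
    using invariant b(1) that by blast
  have "(\<lambda>k. \<alpha> (b k) + \<beta> (b k)) = (\<lambda>k. \<gamma> (b k))"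
  proof (rule internal_direct_sum_unique[OF ds])
    show "\<forall>k<n. \<alpha> (b k) + \<beta> (b k) \<in> B k"
    proof (intro allI impI)
      fix k assume "k < n"
      then have "is_subgroup (B k)" using ds unfolding internal_direct_sum_def by blast
      then show "\<alpha> (b k) + \<beta> (b k) \<in> B k"
        using image_mem abc \<open>k < n\<close> unfolding is_subgroup_def by blast
    qed
    show "\<forall>k<n. \<gamma> (b k) \<in> B k" using image_mem abc by blast
    show "\<forall>k\<ge>n. \<alpha> (b k) + \<beta> (b k) = 0" "\<forall>k\<ge>n. \<gamma> (b k) = 0"
      using b abc by (simp_all add: map_zero)
    show "sum_list (map (\<lambda>k. \<alpha> (b k) + \<beta> (b k)) [0..<n]) = sum_list (map (\<lambda>k. \<gamma> (b k)) [0..<n])"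
      using eq abc by (simp add: x sum_list_map_add map_sum_list)
  qed
  then show ?thesis unfolding fun_eq_iff by blast
qed

lemma qf_definable_direct_summand:
  assumes ds: "internal_direct_sum B n" and invariant: "\<forall>k<n. \<forall>\<alpha>\<in>F. \<alpha> ` B k \<subseteq> B k"
    and "i < n"
    and separated: "\<And>j. j < n \<Longrightarrow> j \<noteq> i \<Longrightarrow> \<exists>\<alpha>\<in>F. \<exists>\<beta>\<in>F. \<exists>\<gamma>\<in>F.
          (\<forall>x\<in>B i. \<alpha> x + \<beta> x = \<gamma> x) \<and> (\<forall>y\<in>B j. \<alpha> y + \<beta> y = \<gamma> y \<longrightarrow> y = 0)"
  shows "qf_definable F (B i)"
proof -
  let ?J = "{j. j < n \<and> j \<noteq> i}"
  obtain \<alpha> \<beta> \<gamma> where abc: "\<And>j. j \<in> ?J \<Longrightarrow> \<alpha> j \<in> F \<and> \<beta> j \<in> F \<and> \<gamma> j \<in> F"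
    and holds: "\<And>j x. j \<in> ?J \<Longrightarrow> x \<in> B i \<Longrightarrow> \<alpha> j x + \<beta> j x = \<gamma> j x"
    and only_zero: "\<And>j y. j \<in> ?J \<Longrightarrow> y \<in> B j \<Longrightarrow> \<alpha> j y + \<beta> j y = \<gamma> j y \<Longrightarrow> y = 0"
    using separated by simp metis
  let ?E = "\<lambda>j. {x. \<alpha> j x + \<beta> j x = \<gamma> j x}"
  have "B i = (\<Inter>j\<in>?J. ?E j)"
  proof
    show "B i \<subseteq> (\<Inter>j\<in>?J. ?E j)" using holds by blast
    show "(\<Inter>j\<in>?J. ?E j) \<subseteq> B i"
    proof
      fix x assume x: "x \<in> (\<Inter>j\<in>?J. ?E j)"
      obtain b where b: "\<forall>k<n. b k \<in> B k" "\<forall>k\<ge>n. b k = 0" "x = sum_list (map b [0..<n])"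
        using ds unfolding internal_direct_sum_def by blast
      have "b j = 0" if "j \<noteq> i" for j
      proof (cases "j < n")
        case True
        then have "\<alpha> j (b j) + \<beta> j (b j) = \<gamma> j (b j)"
          using direct_sum_equation_components[OF ds invariant _ _ _ b] x abc that by simp
        then show ?thesis using only_zero b(1) True that by simp
      qed (use b in simp)
      then have "x = b i" using b(3) sum_list_upt_single[OF \<open>i < n\<close>, of b] by simp
      then show "x \<in> B i" using b(1) \<open>i < n\<close> by simp
    qed
  qed
  moreover have "qf_definable F (\<Inter>j\<in>?J. ?E j)"
    by (rule qf_definable_INT) (simp_all add: qf_definable_equation abc)
  ultimately show ?thesis by simp
qed

end

theorem mainTheorem14:
  fixes F :: "('v::group_add \<Rightarrow> 'v) set" and B :: "nat \<Rightarrow> 'v set" and n :: nat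
  assumes "near_vector_space F"
    and "commutative_nvs F"
    and "B ` {..<n} = {W. is_block F W}"
    and "inj_on B {..<n}"
    and "internal_direct_sum B n"
  shows "(\<forall>i<n. qf_definable F (B i)) \<and> quasi_kernel F = (\<Union>i<n. B i)
         \<and> qf_definable F (quasi_kernel F)"
proof -
  interpret comm_near_vector_space F using assms(1,2) by unfold_locales
  have blocks: "\<And>i. i < n \<Longrightarrow> is_block F (B i)" using assms(3) by blast
  have invariant: "\<forall>k<n. \<forall>\<alpha>\<in>F. \<alpha> ` B k \<subseteq> B k"
    using blocks unfolding is_block_def regular_subspace_def nv_subspace_def by blast
  have definable: "\<forall>i<n. qf_definable F (B i)"
  proof (intro allI impI)
    fix i assume "i < n"
    show "qf_definable F (B i)"
    proof (rule qf_definable_direct_summand[OF assms(5) invariant \<open>i < n\<close>])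
      fix j assume "j < n" "j \<noteq> i"
      then have "B i \<noteq> B j" using assms(4) \<open>i < n\<close> unfolding inj_on_def by blast
      then show "\<exists>\<alpha>\<in>F. \<exists>\<beta>\<in>F. \<exists>\<gamma>\<in>F. (\<forall>x\<in>B i. \<alpha> x + \<beta> x = \<gamma> x) \<and> (\<forall>y\<in>B j. \<alpha> y + \<beta> y = \<gamma> y \<longrightarrow> y = 0)"
        by (rule blocks_separated[OF blocks[OF \<open>i < n\<close>] blocks[OF \<open>j < n\<close>]])
    qed
  qed
  have "Q = (\<Union>i<n. B i)" by (simp add: quasi_kernel_eq_Union_blocks flip: assms(3))
  moreover have "qf_definable F (\<Union>i<n. B i)" by (rule qf_definable_UN) (simp_all add: definable)
  ultimately show ?thesis using definable by simp
qed

end
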